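(* Let $\sigma$ be one of the two numbers $\sigma_+$ or $\sigma_-$ (at a given point), and put $D=1+F\sigma-G^2\sigma^2$. Then the following conditions are mutually equivalent: (a) $N^2=4MP$ (i.e. $\sigma_+=\sigma_-$, and then $\sigma=\frac{N}{2M}$); (b) $\mathcal{L}_F\mathcal{L}_{GG}=N$ and $\mathcal{L}_F\mathcal{L}_{FG}=PG$; (c) $DM=\mathcal{L}_F^2$, $DN=2\mathcal{L}_F^2\sigma$ and $DP=\mathcal{L}_F^2\sigma^2$; (d) $2D\mathcal{L}_{FF}=\mathcal{L}_F\sigma(1+F\sigma)$, $D\mathcal{L}_{GG}=2\mathcal{L}_F\sigma$ and $D\mathcal{L}_{FG}=\mathcal{L}_F G\sigma^2$.
   Context: Let $F_{ab}$ be an antisymmetric tensor (background electromagnetic field) on an oriented 4-dimensional Lorentzian manifold with metric $g_{ab}$ of signature $(-,+,+,+)$; indices are raised and lowered with $g$, $\varepsilon_{abcd}$ is the volume form and ${}^{*}F_{ab}=\frac12\varepsilon_{abcd}F^{cd}$. Its invariants are $F=\frac12F_{ab}F^{ab}$ and $G=-\frac14F_{ab}\,{}^{*}F^{ab}$. Let $\mathcal{L}(F,G)$ be a smooth Lagrangian; $\mathcal{L}_F,\mathcal{L}_G,\mathcal{L}_{FF},\mathcal{L}_{FG},\mathcal{L}_{GG}$ denote its partial derivatives evaluated at the background invariants. Define $M=\mathcal{L}_F^2+2\mathcal{L}_F\mathcal{L}_{FG}G-\frac12\mathcal{L}_F\mathcal{L}_{GG}F-PG^2$, $N=2\mathcal{L}_F\mathcal{L}_{FF}+\frac12\mathcal{L}_F\mathcal{L}_{GG}-PF$,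 $P=\mathcal{L}_{FF}\mathcal{L}_{GG}-\mathcal{L}_{FG}^2$, and $\sigma_\pm=\frac{N}{2M}\pm\sqrt{\frac{N^2}{4M^2}-\frac{P}{M}}$ (these are real). Standing assumptions: $\mathcal{L}_F\neq0$, $M\neq0$, and $1+\sigma_\pm F-\sigma_\pm^2G^2\neq0$ for both signs. *)

theory Defs
  imports Complex_Main
begin

text \<open>All quantities are evaluated at a single spacetime point. Arguments:
  LF = L_F, LFF = L_FF, LFG = L_FG, LGG = L_GG, and F, G the background invariants.\<close>

definition PP :: "real \<Rightarrow> real \<Rightarrow> real \<Rightarrow> real" where
  "PP LFF LFG LGG = LFF * LGG - LFG ^ 2"

definition MM :: "real \<Rightarrow> real \<Rightarrow> real \<Rightarrow> real \<Rightarrow> real \<Rightarrow> real \<Rightarrow> real" where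
  "MM LF LFF LFG LGG F G =
     LF ^ 2 + 2 * LF * LFG * G - (1/2) * LF * LGG * F - PP LFF LFG LGG * G ^ 2"

definition NN :: "real \<Rightarrow> real \<Rightarrow> real \<Rightarrow> real \<Rightarrow> real \<Rightarrow> real \<Rightarrow> real" where
  "NN LF LFF LFG LGG F G =
     2 * LF * LFF + (1/2) * LF * LGG - PP LFF LFG LGG * F"

definition sigma_plus :: "real \<Rightarrow> real \<Rightarrow> real \<Rightarrow> real \<Rightarrow> real \<Rightarrow> real \<Rightarrow> real" where
  "sigma_plus LF LFF LFG LGG F G =
     (let M = MM LF LFF LFG LGG F G; N = NN LF LFF LFG LGG F G; P = PP LFF LFG LGG
      in N / (2 * M) + sqrt (N ^ 2 / (4 * M ^ 2) - P / M))"

definition sigma_minus :: "real \<Rightarrow> real \<Rightarrow> real \<Rightarrow> real \<Rightarrow> real \<Rightarrow> real \<Rightarrow> real" where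
  "sigma_minus LF LFF LFG LGG F G =
     (let M = MM LF LFF LFG LGG F G; N = NN LF LFF LFG LGG F G; P = PP LFF LFG LGG
      in N / (2 * M) - sqrt (N ^ 2 / (4 * M ^ 2) - P / M))"

end

theory Submission
  imports Defs
begin

text \<open>The discriminant \<open>N\<^sup>2 - 4MP\<close> of \<open>M\<sigma>\<^sup>2 - N\<sigma> + P\<close> is a sum of two squares, so it
  vanishes exactly when (b) holds, and then \<open>\<sigma> = N/(2M)\<close> is a double root.
  Multiplying \<open>M\<close>, \<open>N\<close>, \<open>P\<close> by \<open>D\<close> and using \<open>\<sigma>M = N/2\<close>, \<open>\<sigma>\<^sup>2M = P\<close> gives (c);
  conversely (c) makes \<open>D\<^sup>2(N\<^sup>2 - 4MP)\<close> vanish. (c) and (d) are related by dividing by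
  \<open>L\<^sub>F\<close> and \<open>D\<close>, using (b) to express \<open>L\<^sub>FF\<close>, \<open>L\<^sub>GG\<close>, \<open>L\<^sub>FG\<close> through \<open>N\<close> and \<open>P\<close>.\<close>

lemma NN_sq_minus_MM_PP:
  "(NN LF LFF LFG LGG F G)\<^sup>2 - 4 * MM LF LFF LFG LGG F G * PP LFF LFG LGG
   = (LF * LGG - NN LF LFF LFG LGG F G)\<^sup>2 + 4 * (LF * LFG - PP LFF LFG LGG * G)\<^sup>2"
  unfolding NN_def MM_def PP_def by (simp add: power2_eq_square algebra_simps)

lemma discriminant_zero_iff:
  "(NN LF LFF LFG LGG F G)\<^sup>2 = 4 * MM LF LFF LFG LGG F G * PP LFF LFG LGG
   \<longleftrightarrow> LF * LGG = NN LF LFF LFG LGG F G \<and> LF * LFG = PP LFF LFG LGG * G"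
  using NN_sq_minus_MM_PP[of LF LFF LFG LGG F G]
  by (smt (verit) zero_le_power2 zero_eq_power2)

lemma sigma_pm_double_root:
  assumes "MM LF LFF LFG LGG F G \<noteq> 0"
    and "(NN LF LFF LFG LGG F G)\<^sup>2 = 4 * MM LF LFF LFG LGG F G * PP LFF LFG LGG"
  shows "sigma_plus LF LFF LFG LGG F G = NN LF LFF LFG LGG F G / (2 * MM LF LFF LFG LGG F G)"
    and "sigma_minus LF LFF LFG LGG F G = NN LF LFF LFG LGG F G / (2 * MM LF LFF LFG LGG F G)"
proof -
  have "(NN LF LFF LFG LGG F G)\<^sup>2 / (4 * (MM LF LFF LFG LGG F G)\<^sup>2)
        - PP LFF LFG LGG / MM LF LFF LFG LGG F G = 0"
    using assms by (simp add: field_simps power2_eq_square)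
  then show "sigma_plus LF LFF LFG LGG F G = NN LF LFF LFG LGG F G / (2 * MM LF LFF LFG LGG F G)"
    and "sigma_minus LF LFF LFG LGG F G = NN LF LFF LFG LGG F G / (2 * MM LF LFF LFG LGG F G)"
    unfolding sigma_plus_def sigma_minus_def Let_def by simp_all
qed

lemma MM_eq_if_coupled:
  assumes "LF * LGG = NN LF LFF LFG LGG F G" "LF * LFG = PP LFF LFG LGG * G"
  shows "MM LF LFF LFG LGG F G
         = LF\<^sup>2 + PP LFF LFG LGG * G\<^sup>2 - NN LF LFF LFG LGG F G * F / 2"
proof -
  have "MM LF LFF LFG LGG F G
        = LF\<^sup>2 + 2 * (LF * LFG) * G - (LF * LGG) * F / 2 - PP LFF LFG LGG * G\<^sup>2"
    unfolding MM_def by (simp add: algebra_simps)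
  then show ?thesis unfolding assms by (simp add: power2_eq_square)
qed

lemma double_root_identities:
  fixes M N P \<sigma> :: real
  assumes "M \<noteq> 0" "N\<^sup>2 = 4 * M * P" "\<sigma> = N / (2 * M)"
  shows "\<sigma> * M = N / 2" and "\<sigma>\<^sup>2 * M = P"
proof -
  show \<sigma>M: "\<sigma> * M = N / 2" using assms(1,3) by simp
  have "4 * M * (\<sigma>\<^sup>2 * M) = (2 * (\<sigma> * M))\<^sup>2" by (simp add: power2_eq_square)
  also have "\<dots> = 4 * M * P" unfolding \<sigma>M using assms(2) by simp
  finally show "\<sigma>\<^sup>2 * M = P" using assms(1) by simp
qed

lemma coupled_imp_scaled_coefficients:
  fixes LF LFF LFG LGG F G D \<sigma> :: real
  defines "M \<equiv> MM LF LFF LFG LGG F G" and "N \<equiv> NN LF LFF LFG LGG F G"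
    and "P \<equiv> PP LFF LFG LGG"
  assumes "M \<noteq> 0" "LF * LGG = N" "LF * LFG = P * G" "\<sigma> = N / (2 * M)"
    and "D = 1 + F * \<sigma> - G\<^sup>2 * \<sigma>\<^sup>2"
  shows "D * M = LF\<^sup>2 \<and> D * N = 2 * LF\<^sup>2 * \<sigma> \<and> D * P = LF\<^sup>2 * \<sigma>\<^sup>2"
proof -
  have "N\<^sup>2 = 4 * M * P"
    using assms(5,6) discriminant_zero_iff unfolding M_def N_def P_def by blast
  note \<sigma>M = double_root_identities(1)[OF assms(4) this assms(7)]
    and \<sigma>2M = double_root_identities(2)[OF assms(4) this assms(7)]
  have "D * M = M + F * (\<sigma> * M) - G\<^sup>2 * (\<sigma>\<^sup>2 * M)"
    unfolding assms(8) by (simp add: algebra_simps)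
  also have "\<dots> = LF\<^sup>2"
    unfolding \<sigma>M \<sigma>2M unfolding M_def MM_eq_if_coupled[OF assms(5,6)[unfolded N_def P_def]]
    by (simp add: N_def P_def algebra_simps)
  finally have DM: "D * M = LF\<^sup>2" .
  have "N = 2 * (\<sigma> * M)" using \<sigma>M by simp
  then have "D * N = 2 * \<sigma> * (D * M)" by (simp add: algebra_simps)
  moreover have "D * P = \<sigma>\<^sup>2 * (D * M)"
    unfolding \<sigma>2M[symmetric] by (simp add: algebra_simps)
  ultimately show ?thesis using DM by (simp add: algebra_simps)
qed

lemma scaled_coefficients_imp_discriminant_zero:
  fixes M N P D \<sigma> c :: real
  assumes "D \<noteq> 0" "D * M = c" "D * N = 2 * c * \<sigma>" "D * P = c * \<sigma>\<^sup>2"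
  shows "N\<^sup>2 = 4 * M * P"
proof -
  have "D\<^sup>2 * (N\<^sup>2 - 4 * M * P) = (D * N)\<^sup>2 - 4 * (D * M) * (D * P)"
    by (simp add: algebra_simps power2_eq_square)
  also have "\<dots> = 0" using assms(2-4) by (simp add: algebra_simps power2_eq_square)
  finally show ?thesis using assms(1) by simp
qed

lemma scaled_coefficients_imp_second_derivatives:
  fixes LF LFF LFG LGG F G D \<sigma> :: real
  defines "N \<equiv> NN LF LFF LFG LGG F G" and "P \<equiv> PP LFF LFG LGG"
  assumes "LF \<noteq> 0" "LF * LGG = N" "LF * LFG = P * G"
    and "D * N = 2 * LF\<^sup>2 * \<sigma>" "D * P = LF\<^sup>2 * \<sigma>\<^sup>2"
  shows "2 * D * LFF = LF * \<sigma> * (1 + F * \<sigma>) \<and> D * LGG = 2 * LF * \<sigma>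
         \<and> D * LFG = LF * G * \<sigma>\<^sup>2"
proof -
  have "LF * (D * LGG) = LF * (2 * LF * \<sigma>)"
    using assms(4,6) by (simp add: algebra_simps power2_eq_square)
  moreover have "LF * (D * LFG) = LF * (LF * G * \<sigma>\<^sup>2)"
    using assms(5,7) by (simp add: algebra_simps power2_eq_square)
  moreover have "LF * (2 * D * LFF) = D * N / 2 + D * P * F"
  proof -
    have "N = 2 * LF * LFF + LF * LGG / 2 - P * F"
      unfolding N_def P_def NN_def by simp
    then have "2 * LF * LFF = N / 2 + P * F" using assms(4) by linarith
    then have "LF * (2 * D * LFF) = D * (N / 2 + P * F)" by (simp add: algebra_simps)
    then show ?thesis by (simp add: algebra_simps)
  qed
  moreover have "D * N / 2 + D * P * F = LF * (LF * \<sigma> * (1 + F * \<sigma>))"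
    using assms(6,7) by (simp add: algebra_simps power2_eq_square)
  ultimately show ?thesis using assms(3) by simp
qed

lemma second_derivatives_imp_scaled_coefficients:
  fixes LF LFF LFG LGG F G D \<sigma> :: real
  defines "M \<equiv> MM LF LFF LFG LGG F G" and "N \<equiv> NN LF LFF LFG LGG F G"
    and "P \<equiv> PP LFF LFG LGG"
  assumes "D \<noteq> 0" "D = 1 + F * \<sigma> - G\<^sup>2 * \<sigma>\<^sup>2"
    and LFF: "2 * D * LFF = LF * \<sigma> * (1 + F * \<sigma>)"
    and LGG: "D * LGG = 2 * LF * \<sigma>" and LFG: "D * LFG = LF * G * \<sigma>\<^sup>2"
  shows "D * M = LF\<^sup>2 \<and> D * N = 2 * LF\<^sup>2 * \<sigma> \<and> D * P = LF\<^sup>2 * \<sigma>\<^sup>2"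
proof -
  have LFF': "D * LFF = LF * \<sigma> * (1 + F * \<sigma>) / 2" using LFF by simp
  have "D * (D * P) = (D * LFF) * (D * LGG) - (D * LFG)\<^sup>2"
    unfolding P_def PP_def by (simp add: algebra_simps power2_eq_square)
  also have "\<dots> = D * (LF\<^sup>2 * \<sigma>\<^sup>2)"
    unfolding LFF' LGG LFG unfolding assms(5) by (simp add: algebra_simps power2_eq_square)
  finally have DP: "D * P = LF\<^sup>2 * \<sigma>\<^sup>2" using assms(4) by simp
  have "D * N = 2 * LF * (D * LFF) + LF * (D * LGG) / 2 - (D * P) * F"
    unfolding N_def P_def NN_def by (simp add: algebra_simps)
  also have "\<dots> = 2 * LF\<^sup>2 * \<sigma>"
    unfolding LFF' LGG DP by (simp add: algebra_simps power2_eq_square)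
  finally have DN: "D * N = 2 * LF\<^sup>2 * \<sigma>" .
  have "D * M = D * LF\<^sup>2 + 2 * LF * G * (D * LFG) - LF * F * (D * LGG) / 2 - G\<^sup>2 * (D * P)"
    unfolding M_def P_def MM_def by (simp add: algebra_simps)
  also have "\<dots> = LF\<^sup>2"
    unfolding LFG LGG DP unfolding assms(5) by (simp add: algebra_simps power2_eq_square)
  finally show ?thesis using DN DP by simp
qed

theorem proposition1:
  fixes LF LFF LFG LGG F G \<sigma> :: real
  defines "M \<equiv> MM LF LFF LFG LGG F G"
    and "N \<equiv> NN LF LFF LFG LGG F G"
    and "P \<equiv> PP LFF LFG LGG"
    and "D \<equiv> 1 + F * \<sigma> - G ^ 2 * \<sigma> ^ 2"
  assumes LF_nz: "LF \<noteq> 0"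
    and M_nz: "M \<noteq> 0"
    and real_roots: "N ^ 2 / (4 * M ^ 2) - P / M \<ge> 0"
    and Dp_nz: "1 + sigma_plus LF LFF LFG LGG F G * F
                  - (sigma_plus LF LFF LFG LGG F G) ^ 2 * G ^ 2 \<noteq> 0"
    and Dm_nz: "1 + sigma_minus LF LFF LFG LGG F G * F
                  - (sigma_minus LF LFF LFG LGG F G) ^ 2 * G ^ 2 \<noteq> 0"
    and sigma: "\<sigma> = sigma_plus LF LFF LFG LGG F G \<or> \<sigma> = sigma_minus LF LFF LFG LGG F G"
  shows "((N ^ 2 = 4 * M * P)
            \<longleftrightarrow> (LF * LGG = N \<and> LF * LFG = P * G))
       \<and> ((LF * LGG = N \<and> LF * LFG = P * G)
            \<longleftrightarrow> (D * M = LF ^ 2 \<and> D * N = 2 * LF ^ 2 * \<sigma> \<and> D * P = LF ^ 2 * \<sigma> ^ 2))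
       \<and> ((D * M = LF ^ 2 \<and> D * N = 2 * LF ^ 2 * \<sigma> \<and> D * P = LF ^ 2 * \<sigma> ^ 2)
            \<longleftrightarrow> (2 * D * LFF = LF * \<sigma> * (1 + F * \<sigma>) \<and> D * LGG = 2 * LF * \<sigma>
                 \<and> D * LFG = LF * G * \<sigma> ^ 2))"
proof -
  have D_nz: "D \<noteq> 0" using sigma Dp_nz Dm_nz unfolding D_def by (auto simp: algebra_simps)
  have ab: "N\<^sup>2 = 4 * M * P \<longleftrightarrow> LF * LGG = N \<and> LF * LFG = P * G"
    unfolding M_def N_def P_def by (rule discriminant_zero_iff)
  have "\<sigma> = N / (2 * M)" if "N\<^sup>2 = 4 * M * P"
    using sigma sigma_pm_double_root[OF M_nz[unfolded M_def]] that
    unfolding M_def N_def P_def by auto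
  then have bc: "LF * LGG = N \<and> LF * LFG = P * G
     \<longleftrightarrow> D * M = LF\<^sup>2 \<and> D * N = 2 * LF\<^sup>2 * \<sigma> \<and> D * P = LF\<^sup>2 * \<sigma>\<^sup>2"
    using ab coupled_imp_scaled_coefficients[of LF LFF LFG LGG F G \<sigma> D]
      scaled_coefficients_imp_discriminant_zero[OF D_nz] M_nz
    unfolding M_def N_def P_def D_def by blast
  have cd: "D * M = LF\<^sup>2 \<and> D * N = 2 * LF\<^sup>2 * \<sigma> \<and> D * P = LF\<^sup>2 * \<sigma>\<^sup>2
     \<longleftrightarrow> 2 * D * LFF = LF * \<sigma> * (1 + F * \<sigma>) \<and> D * LGG = 2 * LF * \<sigma>
         \<and> D * LFG = LF * G * \<sigma>\<^sup>2"
    using bc scaled_coefficients_imp_second_derivatives[OF LF_nz]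
      second_derivatives_imp_scaled_coefficients[OF D_nz D_def[THEN meta_eq_to_obj_eq]]
    unfolding M_def N_def P_def by blast
  show ?thesis using ab bc cd by blast
qed

end
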